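(* Let $(A,E,\langle\!\langle-,-\rangle\!\rangle,\partial,[\![-,-]\!])$ be a double Courant--Dorfman algebra. Then for all $e,f,g\in E$ the following identities hold (Sweedler summation understood): $$\begin{aligned}&[\![e,[\![f,g]\!]''_r]\!]'_l\otimes[\![e,[\![f,g]\!]''_r]\!]''_l\otimes[\![f,g]\!]'_r=\partial[\![e,f]\!]'_r\otimes\langle\!\langle g,[\![e,f]\!]''_r\rangle\!\rangle'\otimes\langle\!\langle g,[\![e,f]\!]''_r\rangle\!\rangle''\\&\qquad+[\![f,[\![e,g]\!]'_l]\!]''_r\otimes[\![e,g]\!]''_l\otimes[\![f,[\![e,g]\!]'_l]\!]'_r-[\![e,f]\!]'_l\otimes\langle\!\langle g,\partial[\![e,f]\!]''_l\rangle\!\rangle'\otimes\langle\!\langle g,\partial[\![e,f]\!]''_l\rangle\!\rangle'',\end{aligned}$$ $$\begin{aligned}&[\![e,[\![f,g]\!]''_r]\!]'_r\otimes[\![e,[\![f,g]\!]''_r]\!]''_r\otimes[\![f,g]\!]'_r=[\![e,f]\!]'_r\otimes\partial\langle\!\langle g,[\![e,f]\!]''_r\rangle\!\rangle'\otimes\langle\!\langle g,[\![e,f]\!]''_r\rangle\!\rangle''\\&\qquad+\langle\!\langle f,\partial[\![e,g]\!]'_r\rangle\!\rangle''\otimes[\![e,g]\!]''_r\otimes\langle\!\langle f,\partial[\![e,g]\!]'_r\rangle\!\rangle'-[\![e,f]\!]'_r\otimes[\![g,[\![e,f]\!]''_r]\!]'_l\otimes[\![g,[\![e,f]\!]''_r]\!]''_l,\end{aligned}$$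 $$\begin{aligned}&\langle\!\langle e,\partial[\![f,g]\!]''_l\rangle\!\rangle'\otimes\langle\!\langle e,\partial[\![f,g]\!]''_l\rangle\!\rangle''\otimes[\![f,g]\!]'_l=[\![e,f]\!]'_r\otimes\langle\!\langle g,[\![e,f]\!]''_r\rangle\!\rangle'\otimes\partial\langle\!\langle g,[\![e,f]\!]''_r\rangle\!\rangle''\\&\qquad+[\![f,[\![e,g]\!]'_l]\!]''_l\otimes[\![e,g]\!]''_l\otimes[\![f,[\![e,g]\!]'_l]\!]'_l-[\![e,f]\!]'_r\otimes[\![g,[\![e,f]\!]''_r]\!]'_r\otimes[\![g,[\![e,f]\!]''_r]\!]''_r.\end{aligned}$$
   Context: All algebras are associative unital $\Bbbk$-algebras, $\Bbbk$ a field of characteristic zero, $\otimes=\otimes_\Bbbk$. Sweedler notation: $x=x'\otimes x''$ with summation suppressed; $(x'\otimes x'')^\sigma=x''\otimes x'$. Outer structure on $A\otimes A$, $E\otimes A$, $A\otimes E$: $a(x'\otimes x'')b=ax'\otimes x''b$; inner structure on $A\otimes A$: $a*(x'\otimes x'')*b=x'b\otimes ax''$. For $x=x'\otimes x''$ and $y$: $x\otimes_1y:=x'\otimes y\otimes x''$, $y\otimes_1x:=x'\otimes y\otimes x''$. $A$ is an algebra, $E$ an $A$-bimodule, $\partial\colon A\to E$ a derivation, acting on $A\otimes A$ by $\partial(x'\otimes x'')=\partial x'\otimes x''+x'\otimes\partial x''$. A pairing $\langle\!\langle-,-\rangle\!\rangle\colon E\otimes E\to A\otimes A$ is linear with $f\mapsto\langle\!\langle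 e,f\rangle\!\rangle$ a bimodule map to $(A\otimes A)_{\mathrm{out}}$ and $f\mapsto\langle\!\langle f,e\rangle\!\rangle$ a bimodule map to $(A\otimes A)_{\mathrm{inn}}$; symmetric: $\langle\!\langle e,f\rangle\!\rangle=\langle\!\langle f,e\rangle\!\rangle^\sigma$. Extensions: $\langle\!\langle e,f\otimes a\rangle\!\rangle_L=\langle\!\langle e,f\rangle\!\rangle\otimes a$, $\langle\!\langle e,a\otimes f\rangle\!\rangle_L=0$, $\langle\!\langle e,a\otimes f\rangle\!\rangle_R=a\otimes\langle\!\langle e,f\rangle\!\rangle$, $\langle\!\langle e,f\otimes a\rangle\!\rangle_R=0$, $\langle\!\langle e\otimes a,f\rangle\!\rangle_L=\langle\!\langle a\otimes e,f\rangle\!\rangle_R=\langle\!\langle e,f\rangle\!\rangle'\otimes a\otimes\langle\!\langle e,f\rangle\!\rangle''$, $\langle\!\langle a\otimes e,f\rangle\!\rangle_L=\langle\!\langle e\otimes a,f\rangle\!\rangle_R=0$. A double Courant--Dorfman bracket is a linear map $[\![-,-]\!]\colon T_AE\otimes T_AE\to T_AE\otimes T_AE$ of degree $-1$ ($T_AE$ the tensor algebra, $E$ in degree 1) with $[\![e,a]\!]=\langle\!\langle e,\partial a\rangle\!\rangle$, $[\![a,e]\!]=-\langle\!\langle\partial a,e\rangle\!\rangle$, $[\![a,b]\!]=0$; for $e,f\in E$, $[\![e,f]\!]=[\![e,f]\!]_l+[\![e,f]\!]_r\in E\otimes A\oplus A\otimes E$ with $[\![e,f]\!]_l=[\![e,f]\!]'_l\otimes[\![e,f]\!]''_l$,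 $[\![e,f]\!]_r=[\![e,f]\!]'_r\otimes[\![e,f]\!]''_r$. Extensions: $[\![e,f\otimes a]\!]_L=[\![e,f]\!]\otimes a$, $[\![e,a\otimes f]\!]_L=\langle\!\langle e,\partial a\rangle\!\rangle\otimes f$, $[\![e,f\otimes a]\!]_R=f\otimes\langle\!\langle e,\partial a\rangle\!\rangle$, $[\![e,a\otimes f]\!]_R=a\otimes[\![e,f]\!]$, $[\![e\otimes a,f]\!]_L=[\![e,f]\!]\otimes_1a+\langle\!\langle e,f\rangle\!\rangle\otimes_1\partial a$, $[\![a\otimes e,f]\!]_L=-\langle\!\langle\partial a,f\rangle\!\rangle\otimes_1e$. A double Courant--Dorfman algebra is $(A,E,\langle\!\langle-,-\rangle\!\rangle,\partial,[\![-,-]\!])$ with symmetric pairing, derivation and double Courant--Dorfman bracket such that for all $a,b\in A$, $e,f,g\in E$: $\partial\langle\!\langle e,f\rangle\!\rangle=[\![e,f]\!]+[\![f,e]\!]^\sigma$; $[\![\partial a,e]\!]=0$; $\langle\!\langle\partial a,\partial b\rangle\!\rangle=0$; $[\![e,fa]\!]=[\![e,f]\!]a+f\langle\!\langle e,\partial a\rangle\!\rangle$; $[\![e,af]\!]=a[\![e,f]\!]+\langle\!\langle e,\partial a\rangle\!\rangle f$; $[\![e,[\![f,g]\!]]\!]_L=[\![f,[\![e,g]\!]]\!]_R+[\![[\![e,f]\!],g]\!]_L$; $\langle\!\langle e,\partial\langle\!\langle f,g\rangle\!\rangle\rangle\!\rangle_L=\langle\!\langle f,[\![e,g]\!]\rangle\!\rangle_R+\langle\!\langle[\![e,f]\!],g\rangle\!\rangle_L$.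 *)

theory Defs
  imports Main
begin

text \<open>
The algebra A is a type 'a of class ring_1 (associative, unital) together with
a structure map iota : k -> A which is a unital ring homomorphism into the centre
(this is exactly a k-algebra structure; k acts on A by c.x = iota c * x).
The A-bimodule E is a type 'e of class ab_group_add with a left action la and a
right action ra; k acts on E through iota (symmetrically).

Tensor products over k are represented by finite formal sums, i.e. lists of pairs
(resp. triples) of pure tensors.  Two such lists denote the same element of the
tensor product iff every k-multilinear form to k takes the same value on them
(over a field the linear functionals separate the points of a tensor product);
this is the relation teq2 / teq3.  Sweedler notation becomes list comprehension.
\<close>

definition scA :: "('k::field \<Rightarrow> 'a::ring_1) \<Rightarrow> 'k \<Rightarrow> 'a \<Rightarrow> 'a" where
  "scA \<iota> c x = \<iota> c * x"

definition scE :: "('k::field \<Rightarrow> 'a::ring_1) \<Rightarrow> ('a \<Rightarrow> 'e \<Rightarrow> 'e) \<Rightarrow> 'k \<Rightarrow> 'e \<Rightarrow> 'e" where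
  "scE \<iota> la c x = la (\<iota> c) x"

definition klin :: "('k::field \<Rightarrow> 'x::ab_group_add \<Rightarrow> 'x) \<Rightarrow> ('x \<Rightarrow> 'k) \<Rightarrow> bool" where
  "klin s f \<longleftrightarrow> (\<forall>x y. f (x + y) = f x + f y) \<and> (\<forall>c x. f (s c x) = c * f x)"

definition kbilin :: "('k::field \<Rightarrow> 'x::ab_group_add \<Rightarrow> 'x) \<Rightarrow> ('k \<Rightarrow> 'y::ab_group_add \<Rightarrow> 'y)
    \<Rightarrow> ('x \<Rightarrow> 'y \<Rightarrow> 'k) \<Rightarrow> bool" where
  "kbilin s1 s2 \<phi> \<longleftrightarrow> (\<forall>y. klin s1 (\<lambda>x. \<phi> x y)) \<and> (\<forall>x. klin s2 (\<lambda>y. \<phi> x y))"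

definition ktrilin :: "('k::field \<Rightarrow> 'x::ab_group_add \<Rightarrow> 'x) \<Rightarrow> ('k \<Rightarrow> 'y::ab_group_add \<Rightarrow> 'y)
    \<Rightarrow> ('k \<Rightarrow> 'z::ab_group_add \<Rightarrow> 'z) \<Rightarrow> ('x \<Rightarrow> 'y \<Rightarrow> 'z \<Rightarrow> 'k) \<Rightarrow> bool" where
  "ktrilin s1 s2 s3 \<phi> \<longleftrightarrow> (\<forall>y z. klin s1 (\<lambda>x. \<phi> x y z)) \<and> (\<forall>x z. klin s2 (\<lambda>y. \<phi> x y z))
      \<and> (\<forall>x y. klin s3 (\<lambda>z. \<phi> x y z))"

definition teq2 :: "('k::field \<Rightarrow> 'x::ab_group_add \<Rightarrow> 'x) \<Rightarrow> ('k \<Rightarrow> 'y::ab_group_add \<Rightarrow> 'y)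
    \<Rightarrow> ('x \<times> 'y) list \<Rightarrow> ('x \<times> 'y) list \<Rightarrow> bool" where
  "teq2 s1 s2 xs ys \<longleftrightarrow> (\<forall>\<phi>. kbilin s1 s2 \<phi> \<longrightarrow>
      sum_list (map (\<lambda>(x, y). \<phi> x y) xs) = sum_list (map (\<lambda>(x, y). \<phi> x y) ys))"

definition teq3 :: "('k::field \<Rightarrow> 'x::ab_group_add \<Rightarrow> 'x) \<Rightarrow> ('k \<Rightarrow> 'y::ab_group_add \<Rightarrow> 'y)
    \<Rightarrow> ('k \<Rightarrow> 'z::ab_group_add \<Rightarrow> 'z) \<Rightarrow> ('x \<times> 'y \<times> 'z) list \<Rightarrow> ('x \<times> 'y \<times> 'z) list \<Rightarrow> bool" where
  "teq3 s1 s2 s3 xs ys \<longleftrightarrow> (\<forall>\<phi>. ktrilin s1 s2 s3 \<phi> \<longrightarrow>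
      sum_list (map (\<lambda>(x, y, z). \<phi> x y z) xs) = sum_list (map (\<lambda>(x, y, z). \<phi> x y z) ys))"

definition k_algebra :: "('k::field_char_0 \<Rightarrow> 'a::ring_1) \<Rightarrow> bool" where
  "k_algebra \<iota> \<longleftrightarrow> \<iota> 1 = 1 \<and> (\<forall>c d. \<iota> (c + d) = \<iota> c + \<iota> d) \<and> (\<forall>c d. \<iota> (c * d) = \<iota> c * \<iota> d)
     \<and> (\<forall>c x. \<iota> c * x = x * \<iota> c)"

definition bimodule :: "('k::field_char_0 \<Rightarrow> 'a::ring_1) \<Rightarrow> ('a \<Rightarrow> 'e::ab_group_add \<Rightarrow> 'e)
    \<Rightarrow> ('e \<Rightarrow> 'a \<Rightarrow> 'e) \<Rightarrow> bool" where
  "bimodule \<iota> la ra \<longleftrightarrow>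
     (\<forall>a b e. la (a * b) e = la a (la b e)) \<and> (\<forall>e. la 1 e = e)
   \<and> (\<forall>a b e. la (a + b) e = la a e + la b e) \<and> (\<forall>a e f. la a (e + f) = la a e + la a f)
   \<and> (\<forall>a b e. ra e (a * b) = ra (ra e a) b) \<and> (\<forall>e. ra e 1 = e)
   \<and> (\<forall>a b e. ra e (a + b) = ra e a + ra e b) \<and> (\<forall>a e f. ra (e + f) a = ra e a + ra f a)
   \<and> (\<forall>a b e. la a (ra e b) = ra (la a e) b)
   \<and> (\<forall>c e. la (\<iota> c) e = ra e (\<iota> c))"

definition derivation :: "('k::field_char_0 \<Rightarrow> 'a::ring_1) \<Rightarrow> ('a \<Rightarrow> 'e::ab_group_add \<Rightarrow> 'e)
    \<Rightarrow> ('e \<Rightarrow> 'a \<Rightarrow> 'e) \<Rightarrow> ('a \<Rightarrow> 'e) \<Rightarrow> bool" where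
  "derivation \<iota> la ra d \<longleftrightarrow>
     (\<forall>a b. d (a + b) = d a + d b) \<and> (\<forall>c a. d (\<iota> c * a) = la (\<iota> c) (d a))
   \<and> (\<forall>a b. d (a * b) = ra (d a) b + la a (d b))"

definition symmetric_pairing :: "('k::field_char_0 \<Rightarrow> 'a::ring_1) \<Rightarrow> ('a \<Rightarrow> 'e::ab_group_add \<Rightarrow> 'e)
    \<Rightarrow> ('e \<Rightarrow> 'a \<Rightarrow> 'e) \<Rightarrow> ('e \<Rightarrow> 'e \<Rightarrow> ('a \<times> 'a) list) \<Rightarrow> bool" where
  "symmetric_pairing \<iota> la ra P \<longleftrightarrow>
     (\<forall>e f g. teq2 (scA \<iota>) (scA \<iota>) (P (e + f) g) (P e g @ P f g))
   \<and> (\<forall>e f g. teq2 (scA \<iota>) (scA \<iota>) (P e (f + g)) (P e f @ P e g))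
   \<and> (\<forall>c e f. teq2 (scA \<iota>) (scA \<iota>) (P (scE \<iota> la c e) f) (map (\<lambda>(x, y). (scA \<iota> c x, y)) (P e f)))
   \<and> (\<forall>c e f. teq2 (scA \<iota>) (scA \<iota>) (P e (scE \<iota> la c f)) (map (\<lambda>(x, y). (scA \<iota> c x, y)) (P e f)))
   \<and> (\<forall>a b e f. teq2 (scA \<iota>) (scA \<iota>) (P e (la a (ra f b))) (map (\<lambda>(x, y). (a * x, y * b)) (P e f)))
   \<and> (\<forall>a b e f. teq2 (scA \<iota>) (scA \<iota>) (P (la a (ra f b)) e) (map (\<lambda>(x, y). (x * b, a * y)) (P f e)))
   \<and> (\<forall>e f. teq2 (scA \<iota>) (scA \<iota>) (P e f) (map (\<lambda>(x, y). (y, x)) (P f e)))"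

text \<open>The restriction of the double Courant--Dorfman bracket to E (x) E, with values
  [[e,f]] = Bl e f + Br e f in E (x) A (+) A (x) E; it is k-bilinear.\<close>
definition bracket_bilinear :: "('k::field_char_0 \<Rightarrow> 'a::ring_1) \<Rightarrow> ('a \<Rightarrow> 'e::ab_group_add \<Rightarrow> 'e)
    \<Rightarrow> ('e \<Rightarrow> 'e \<Rightarrow> ('e \<times> 'a) list) \<Rightarrow> ('e \<Rightarrow> 'e \<Rightarrow> ('a \<times> 'e) list) \<Rightarrow> bool" where
  "bracket_bilinear \<iota> la Bl Br \<longleftrightarrow>
     (\<forall>e f g. teq2 (scE \<iota> la) (scA \<iota>) (Bl (e + f) g) (Bl e g @ Bl f g)
            \<and> teq2 (scA \<iota>) (scE \<iota> la) (Br (e + f) g) (Br e g @ Br f g))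
   \<and> (\<forall>e f g. teq2 (scE \<iota> la) (scA \<iota>) (Bl e (f + g)) (Bl e f @ Bl e g)
            \<and> teq2 (scA \<iota>) (scE \<iota> la) (Br e (f + g)) (Br e f @ Br e g))
   \<and> (\<forall>c e f. teq2 (scE \<iota> la) (scA \<iota>) (Bl (scE \<iota> la c e) f) (map (\<lambda>(x, y). (x, scA \<iota> c y)) (Bl e f))
            \<and> teq2 (scA \<iota>) (scE \<iota> la) (Br (scE \<iota> la c e) f) (map (\<lambda>(x, y). (scA \<iota> c x, y)) (Br e f)))
   \<and> (\<forall>c e f. teq2 (scE \<iota> la) (scA \<iota>) (Bl e (scE \<iota> la c f)) (map (\<lambda>(x, y). (x, scA \<iota> c y)) (Bl e f))
            \<and> teq2 (scA \<iota>) (scE \<iota> la) (Br e (scE \<iota> la c f)) (map (\<lambda>(x, y). (scA \<iota> c x, y)) (Br e f)))"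

text \<open>A double Courant--Dorfman algebra (A, E, P, d, [[-,-]]).  The extensions of the
  bracket and pairing to tensors of degree 2 are unfolded according to the rules
  in the paper.\<close>
definition double_CD_algebra :: "('k::field_char_0 \<Rightarrow> 'a::ring_1) \<Rightarrow> ('a \<Rightarrow> 'e::ab_group_add \<Rightarrow> 'e)
    \<Rightarrow> ('e \<Rightarrow> 'a \<Rightarrow> 'e) \<Rightarrow> ('e \<Rightarrow> 'e \<Rightarrow> ('a \<times> 'a) list) \<Rightarrow> ('a \<Rightarrow> 'e)
    \<Rightarrow> ('e \<Rightarrow> 'e \<Rightarrow> ('e \<times> 'a) list) \<Rightarrow> ('e \<Rightarrow> 'e \<Rightarrow> ('a \<times> 'e) list) \<Rightarrow> bool" where
  "double_CD_algebra \<iota> la ra P d Bl Br \<longleftrightarrow>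
     k_algebra \<iota> \<and> bimodule \<iota> la ra \<and> derivation \<iota> la ra d
   \<and> symmetric_pairing \<iota> la ra P \<and> bracket_bilinear \<iota> la Bl Br
   \<comment> \<open>d<<e,f>> = [[e,f]] + [[f,e]]^sigma\<close>
   \<and> (\<forall>e f. teq2 (scE \<iota> la) (scA \<iota>) (map (\<lambda>(x, y). (d x, y)) (P e f))
                 (Bl e f @ map (\<lambda>(x, y). (y, x)) (Br f e))
          \<and> teq2 (scA \<iota>) (scE \<iota> la) (map (\<lambda>(x, y). (x, d y)) (P e f))
                 (Br e f @ map (\<lambda>(x, y). (y, x)) (Bl f e)))
   \<comment> \<open>[[da, e]] = 0\<close>
   \<and> (\<forall>a e. teq2 (scE \<iota> la) (scA \<iota>) (Bl (d a) e) [] \<and> teq2 (scA \<iota>) (scE \<iota> la) (Br (d a) e) [])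
   \<comment> \<open><<da, db>> = 0\<close>
   \<and> (\<forall>a b. teq2 (scA \<iota>) (scA \<iota>) (P (d a) (d b)) [])
   \<comment> \<open>[[e, f a]] = [[e,f]] a + f <<e, da>>\<close>
   \<and> (\<forall>e f a. teq2 (scE \<iota> la) (scA \<iota>) (Bl e (ra f a))
                 (map (\<lambda>(x, y). (x, y * a)) (Bl e f) @ map (\<lambda>(p1, p2). (ra f p1, p2)) (P e (d a)))
          \<and> teq2 (scA \<iota>) (scE \<iota> la) (Br e (ra f a)) (map (\<lambda>(x, y). (x, ra y a)) (Br e f)))
   \<comment> \<open>[[e, a f]] = a [[e,f]] + <<e, da>> f\<close>
   \<and> (\<forall>e f a. teq2 (scE \<iota> la) (scA \<iota>) (Bl e (la a f)) (map (\<lambda>(x, y). (la a x, y)) (Bl e f))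
          \<and> teq2 (scA \<iota>) (scE \<iota> la) (Br e (la a f))
                 (map (\<lambda>(x, y). (a * x, y)) (Br e f) @ map (\<lambda>(p1, p2). (p1, la p2 f)) (P e (d a))))
   \<comment> \<open>[[e,[[f,g]]]]_L = [[f,[[e,g]]]]_R + [[[[e,f]],g]]_L, componentwise in
       E(x)A(x)A, A(x)E(x)A, A(x)A(x)E\<close>
   \<and> (\<forall>e f g.
        teq3 (scE \<iota> la) (scA \<iota>) (scA \<iota>)
          [(l1, l2, x2). (x1, x2) \<leftarrow> Bl f g, (l1, l2) \<leftarrow> Bl e x1]
          ([(z1, p1, p2). (z1, z2) \<leftarrow> Bl e g, (p1, p2) \<leftarrow> P f (d z2)]
           @ [(l1, u2, l2). (u1, u2) \<leftarrow> Bl e f, (l1, l2) \<leftarrow> Bl u1 g])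
      \<and> teq3 (scA \<iota>) (scE \<iota> la) (scA \<iota>)
          [(r1, r2, x2). (x1, x2) \<leftarrow> Bl f g, (r1, r2) \<leftarrow> Br e x1]
          ([(w1, l1, l2). (w1, w2) \<leftarrow> Br e g, (l1, l2) \<leftarrow> Bl f w2]
           @ [(p1, d u2, p2). (u1, u2) \<leftarrow> Bl e f, (p1, p2) \<leftarrow> P u1 g]
           @ [(- p1, v2, p2). (v1, v2) \<leftarrow> Br e f, (p1, p2) \<leftarrow> P (d v1) g])
      \<and> teq3 (scA \<iota>) (scA \<iota>) (scE \<iota> la)
          [(p1, p2, y2). (y1, y2) \<leftarrow> Br f g, (p1, p2) \<leftarrow> P e (d y1)]
          ([(w1, r1, r2). (w1, w2) \<leftarrow> Br e g, (r1, r2) \<leftarrow> Br f w2]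
           @ [(r1, u2, r2). (u1, u2) \<leftarrow> Bl e f, (r1, r2) \<leftarrow> Br u1 g]))
   \<comment> \<open><<e, d<<f,g>>>>_L = <<f,[[e,g]]>>_R + <<[[e,f]],g>>_L in A(x)A(x)A\<close>
   \<and> (\<forall>e f g.
        teq3 (scA \<iota>) (scA \<iota>) (scA \<iota>)
          [(p1, p2, q2). (q1, q2) \<leftarrow> P f g, (p1, p2) \<leftarrow> P e (d q1)]
          ([(w1, p1, p2). (w1, w2) \<leftarrow> Br e g, (p1, p2) \<leftarrow> P f w2]
           @ [(p1, u2, p2). (u1, u2) \<leftarrow> Bl e f, (p1, p2) \<leftarrow> P u1 g]))"

end

theory Submission
  imports Defs
begin

text \<open>
Each identity is obtained from a component of the Jacobi identity
[[e,[[f,g]]]]_L = [[f,[[e,g]]]]_R + [[[[e,f]],g]]_L, with e and f interchanged, by a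
cyclic rotation of the tensor factors.  This matches all terms up to corrections
containing [[e,f]] and [[f,e]]; the axiom d<<e,f>> = [[e,f]] + [[f,e]]^sigma turns them
into evaluations of bilinear forms on <<e,f>> with d applied to one leg.  In the second
and third identity the form vanishes on A (x) dA because [[da,-]] = 0.  In the first one
the two corrections put d on different legs of <<e,f>>, but the form applies d to the
remaining leg as well, so both are the same evaluation of (d (x) d)<<e,f>>.
\<close>

lemma sum_list_map_concat: "(\<Sum>x\<leftarrow>concat xss. h x) = (\<Sum>xs\<leftarrow>xss. \<Sum>x\<leftarrow>xs. h x)"
  by (induction xss) auto

lemma sum_list_uminus: "(\<Sum>x\<leftarrow>xs. - f x) = - (\<Sum>x\<leftarrow>xs. f x :: 'a::ab_group_add)"
  by (induction xs) simp_all

lemmas sum_list_nested_simps =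
  sum_list_map_concat sum_list_addf sum_list_uminus case_prod_unfold o_def

lemma klin_uminus:
  assumes "klin s f"
  shows "f (- x) = - f x"
proof -
  have "f (- x) + f x = f 0"
    using assms by (metis klin_def add.left_inverse)
  moreover have "f 0 = 0"
    using assms by (metis klin_def add_0 add_left_cancel add.right_neutral)
  ultimately show ?thesis
    by (simp add: eq_neg_iff_add_eq_0)
qed

lemma klin_sum_list:
  "(\<And>y. klin s (\<lambda>x. F x y)) \<Longrightarrow> klin s (\<lambda>x. \<Sum>y\<leftarrow>ys. F x y)"
  by (induction ys) (auto simp: klin_def distrib_left)

lemma ktrilin_uminus:
  assumes "ktrilin s1 s2 s3 \<phi>"
  shows "\<phi> (- x) y z = - \<phi> x y z"
    and "\<phi> x (- y) z = - \<phi> x y z"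
    and "\<phi> x y (- z) = - \<phi> x y z"
  using assms klin_uminus unfolding ktrilin_def by metis+

lemma ktrilin_rotate: "ktrilin s1 s2 s3 \<phi> \<Longrightarrow> ktrilin s3 s1 s2 (\<lambda>x y z. \<phi> y z x)"
  by (simp add: ktrilin_def)

lemma kbilin_contract:
  assumes \<phi>: "ktrilin s1 s2 s3 \<phi>"
    and L: "\<And>\<psi>. kbilin s3 s2 \<psi> \<Longrightarrow> klin s (\<lambda>x. \<Sum>(p, q)\<leftarrow>L x. \<psi> p q)"
  shows "kbilin s1 s (\<lambda>a x. \<Sum>(p, q)\<leftarrow>L x. \<phi> a q p)"
  unfolding kbilin_def
proof (intro conjI allI)
  show "klin s1 (\<lambda>a. \<Sum>(p, q)\<leftarrow>L x. \<phi> a q p)" for x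
    using \<phi> by (intro klin_sum_list) (simp add: ktrilin_def case_prod_unfold)
  show "klin s (\<lambda>x. \<Sum>(p, q)\<leftarrow>L x. \<phi> a q p)" for a
    using \<phi> by (intro L) (simp add: kbilin_def ktrilin_def)
qed

lemma kbilin_sum_scale_fst:
  "kbilin s1 s2 \<psi> \<Longrightarrow>
    (\<Sum>(x, y)\<leftarrow>map (\<lambda>(x, y). (s1 c x, y)) xs. \<psi> x y) = c * (\<Sum>(x, y)\<leftarrow>xs. \<psi> x y)"
  by (induction xs) (auto simp: kbilin_def klin_def distrib_left)

lemma kbilin_sum_scale_snd:
  "kbilin s1 s2 \<psi> \<Longrightarrow>
    (\<Sum>(x, y)\<leftarrow>map (\<lambda>(x, y). (x, s2 c y)) xs. \<psi> x y) = c * (\<Sum>(x, y)\<leftarrow>xs. \<psi> x y)"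
  by (induction xs) (auto simp: kbilin_def klin_def distrib_left)

lemma teq2_sum:
  "teq2 s1 s2 xs ys \<Longrightarrow> kbilin s1 s2 \<psi> \<Longrightarrow>
    (\<Sum>(x, y)\<leftarrow>xs. \<psi> x y) = (\<Sum>(x, y)\<leftarrow>ys. \<psi> x y)"
  by (simp add: teq2_def)

lemma teq2_trans: "teq2 s1 s2 xs ys \<Longrightarrow> teq2 s1 s2 ys zs \<Longrightarrow> teq2 s1 s2 xs zs"
  by (simp add: teq2_def)

lemma teq2_scale_swap:
  "teq2 s1 s2 (map (\<lambda>(x, y). (x, s2 c y)) xs) (map (\<lambda>(x, y). (s1 c x, y)) xs)"
  unfolding teq2_def by (metis kbilin_sum_scale_fst kbilin_sum_scale_snd)

lemma klin_sum_teq2: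
  assumes add: "\<And>x y. teq2 s1 s2 (L (x + y)) (L x @ L y)"
    and scale: "\<And>c x. teq2 s1 s2 (L (s c x)) (map (\<lambda>(a, b). (s1 c a, b)) (L x))"
    and \<psi>: "kbilin s1 s2 \<psi>"
  shows "klin s (\<lambda>x. \<Sum>(a, b)\<leftarrow>L x. \<psi> a b)"
  unfolding klin_def
  using teq2_sum[OF add \<psi>] teq2_sum[OF scale \<psi>] kbilin_sum_scale_fst[OF \<psi>] by simp

lemma teq3_sum:
  "teq3 s1 s2 s3 xs ys \<Longrightarrow> ktrilin s1 s2 s3 \<phi> \<Longrightarrow>
    (\<Sum>(x, y, z)\<leftarrow>xs. \<phi> x y z) = (\<Sum>(x, y, z)\<leftarrow>ys. \<phi> x y z)"
  by (simp add: teq3_def)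

lemma teq3I:
  "(\<And>\<phi>. ktrilin s1 s2 s3 \<phi> \<Longrightarrow>
      (\<Sum>(x, y, z)\<leftarrow>xs. \<phi> x y z) = (\<Sum>(x, y, z)\<leftarrow>ys. \<phi> x y z))
    \<Longrightarrow> teq3 s1 s2 s3 xs ys"
  by (simp add: teq3_def)

locale double_CD =
  fixes \<iota> :: "'k::field_char_0 \<Rightarrow> 'a::ring_1"
    and la :: "'a \<Rightarrow> 'e::ab_group_add \<Rightarrow> 'e"
    and ra :: "'e \<Rightarrow> 'a \<Rightarrow> 'e"
    and P :: "'e \<Rightarrow> 'e \<Rightarrow> ('a \<times> 'a) list"
    and d :: "'a \<Rightarrow> 'e"
    and Bl :: "'e \<Rightarrow> 'e \<Rightarrow> ('e \<times> 'a) list"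
    and Br :: "'e \<Rightarrow> 'e \<Rightarrow> ('a \<times> 'e) list"
  assumes double_CD_algebra: "double_CD_algebra \<iota> la ra P d Bl Br"
begin

abbreviation "sA \<equiv> scA \<iota>"
abbreviation "sE \<equiv> scE \<iota> la"

lemma deriv_add: "d (a + b) = d a + d b"
  using double_CD_algebra by (simp add: double_CD_algebra_def derivation_def)

lemma deriv_scale: "d (sA c a) = sE c (d a)"
  using double_CD_algebra unfolding double_CD_algebra_def derivation_def scA_def scE_def
  by blast

lemma pairing_add_left: "teq2 sA sA (P (e + f) g) (P e g @ P f g)"
  and pairing_scale_left: "teq2 sA sA (P (sE c e) f) (map (\<lambda>(x, y). (sA c x, y)) (P e f))"
  and pairing_sym: "teq2 sA sA (P e f) (map (\<lambda>(x, y). (y, x)) (P f e))"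
  using double_CD_algebra by (simp_all add: double_CD_algebra_def symmetric_pairing_def)

lemma bracket_l_add_left: "teq2 sE sA (Bl (e + f) g) (Bl e g @ Bl f g)"
  and bracket_l_scale_left: "teq2 sE sA (Bl (sE c e) f) (map (\<lambda>(x, y). (x, sA c y)) (Bl e f))"
  and bracket_r_add_left: "teq2 sA sE (Br (e + f) g) (Br e g @ Br f g)"
  and bracket_r_scale_left: "teq2 sA sE (Br (sE c e) f) (map (\<lambda>(x, y). (sA c x, y)) (Br e f))"
  using double_CD_algebra by (simp_all add: double_CD_algebra_def bracket_bilinear_def)

lemma deriv_pairing_fst:
    "teq2 sE sA (map (\<lambda>(x, y). (d x, y)) (P e f)) (Bl e f @ map (\<lambda>(x, y). (y, x)) (Br f e))"
  and deriv_pairing_snd: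
    "teq2 sA sE (map (\<lambda>(x, y). (x, d y)) (P e f)) (Br e f @ map (\<lambda>(x, y). (y, x)) (Bl f e))"
  and bracket_l_deriv_left: "teq2 sE sA (Bl (d a) e) []"
  and bracket_r_deriv_left: "teq2 sA sE (Br (d a) e) []"
  using double_CD_algebra by (simp_all add: double_CD_algebra_def)

lemma jacobi_EAA:
    "teq3 sE sA sA
      [(l1, l2, x2). (x1, x2) \<leftarrow> Bl f g, (l1, l2) \<leftarrow> Bl e x1]
      ([(z1, p1, p2). (z1, z2) \<leftarrow> Bl e g, (p1, p2) \<leftarrow> P f (d z2)]
       @ [(l1, u2, l2). (u1, u2) \<leftarrow> Bl e f, (l1, l2) \<leftarrow> Bl u1 g])"
  and jacobi_AEA:
    "teq3 sA sE sA
      [(r1, r2, x2). (x1, x2) \<leftarrow> Bl f g, (r1, r2) \<leftarrow> Br e x1]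
      ([(w1, l1, l2). (w1, w2) \<leftarrow> Br e g, (l1, l2) \<leftarrow> Bl f w2]
       @ [(p1, d u2, p2). (u1, u2) \<leftarrow> Bl e f, (p1, p2) \<leftarrow> P u1 g]
       @ [(- p1, v2, p2). (v1, v2) \<leftarrow> Br e f, (p1, p2) \<leftarrow> P (d v1) g])"
  and jacobi_AAE:
    "teq3 sA sA sE
      [(p1, p2, y2). (y1, y2) \<leftarrow> Br f g, (p1, p2) \<leftarrow> P e (d y1)]
      ([(w1, r1, r2). (w1, w2) \<leftarrow> Br e g, (r1, r2) \<leftarrow> Br f w2]
       @ [(r1, u2, r2). (u1, u2) \<leftarrow> Bl e f, (r1, r2) \<leftarrow> Br u1 g])"
  using double_CD_algebra by (simp_all add: double_CD_algebra_def)

lemma klin_comp_deriv: "klin sE F \<Longrightarrow> klin sA (\<lambda>a. F (d a))"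
  by (simp add: klin_def deriv_add deriv_scale)

lemma klin_pairing_left: "kbilin sA sA \<psi> \<Longrightarrow> klin sE (\<lambda>e. \<Sum>(x, y)\<leftarrow>P e g. \<psi> x y)"
  by (rule klin_sum_teq2[where L = "\<lambda>e. P e g", OF pairing_add_left pairing_scale_left])

lemma klin_bracket_l_left: "kbilin sE sA \<psi> \<Longrightarrow> klin sE (\<lambda>e. \<Sum>(x, y)\<leftarrow>Bl e g. \<psi> x y)"
  by (rule klin_sum_teq2[where L = "\<lambda>e. Bl e g",
        OF bracket_l_add_left teq2_trans[OF bracket_l_scale_left teq2_scale_swap]])

lemma klin_bracket_r_left: "kbilin sA sE \<psi> \<Longrightarrow> klin sE (\<lambda>e. \<Sum>(x, y)\<leftarrow>Br e g. \<psi> x y)"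
  by (rule klin_sum_teq2[where L = "\<lambda>e. Br e g", OF bracket_r_add_left bracket_r_scale_left])

lemma sum_pairing_swap:
  "kbilin sA sA \<psi> \<Longrightarrow> (\<Sum>(x, y)\<leftarrow>P e f. \<psi> x y) = (\<Sum>(x, y)\<leftarrow>P f e. \<psi> y x)"
  using teq2_sum[OF pairing_sym] by (simp add: case_prod_unfold o_def)

lemma sum_pairing_deriv_fst:
  "kbilin sE sA \<psi> \<Longrightarrow>
    (\<Sum>(a, b)\<leftarrow>P e f. \<psi> (d a) b)
      = (\<Sum>(x, a)\<leftarrow>Bl e f. \<psi> x a) + (\<Sum>(a, x)\<leftarrow>Br f e. \<psi> x a)"
  using teq2_sum[OF deriv_pairing_fst] by (simp add: case_prod_unfold o_def)

lemma sum_pairing_deriv_snd: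
  "kbilin sA sE \<psi> \<Longrightarrow>
    (\<Sum>(a, b)\<leftarrow>P e f. \<psi> a (d b))
      = (\<Sum>(a, x)\<leftarrow>Br e f. \<psi> a x) + (\<Sum>(x, a)\<leftarrow>Bl f e. \<psi> a x)"
  using teq2_sum[OF deriv_pairing_snd] by (simp add: case_prod_unfold o_def)

lemma sum_brackets_deriv_exchange:
  assumes "kbilin sE sE \<Phi>"
  shows "(\<Sum>(x, a)\<leftarrow>Bl e f. \<Phi> x (d a)) + (\<Sum>(a, x)\<leftarrow>Br f e. \<Phi> x (d a))
       = (\<Sum>(a, x)\<leftarrow>Br e f. \<Phi> (d a) x) + (\<Sum>(x, a)\<leftarrow>Bl f e. \<Phi> (d a) x)"
proof -
  have "kbilin sE sA (\<lambda>x a. \<Phi> x (d a))" and "kbilin sA sE (\<lambda>a x. \<Phi> (d a) x)"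
    using assms klin_comp_deriv by (auto simp: kbilin_def)
  from sum_pairing_deriv_fst[OF this(1)] sum_pairing_deriv_snd[OF this(2)]
  show ?thesis by simp
qed

lemma sum_brackets_skew_vanish:
  assumes "kbilin sA sE \<psi>" and "\<And>a b. \<psi> a (d b) = 0"
  shows "(\<Sum>(a, x)\<leftarrow>Br e f. \<psi> a x) + (\<Sum>(x, a)\<leftarrow>Bl f e. \<psi> a x) = 0"
  using sum_pairing_deriv_snd[OF assms(1)] assms(2) by (simp add: case_prod_unfold)

lemma cyclic_jacobi_EAA:
  "teq3 sE sA sA
     [(l1, l2, y1). (y1, y2) \<leftarrow> Br f g, (l1, l2) \<leftarrow> Bl e y2]
     ([(d v1, p1, p2). (v1, v2) \<leftarrow> Br e f, (p1, p2) \<leftarrow> P g v2]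
      @ [(r2, z2, r1). (z1, z2) \<leftarrow> Bl e g, (r1, r2) \<leftarrow> Br f z1]
      @ [(u1, - p1, p2). (u1, u2) \<leftarrow> Bl e f, (p1, p2) \<leftarrow> P g (d u2)])"
proof (rule teq3I, goal_cases eval)
  case (eval \<phi>)
  define \<Phi> where "\<Phi> x y = (\<Sum>(p1, p2)\<leftarrow>P y g. \<phi> x p2 p1)" for x y
  have "kbilin sE sE \<Phi>"
    unfolding \<Phi>_def
    by (rule kbilin_contract[where L = "\<lambda>y. P y g", OF eval klin_pairing_left])
  then have exchange:
    "(\<Sum>(u1, u2)\<leftarrow>Bl e f. \<Phi> u1 (d u2)) + (\<Sum>(v1, v2)\<leftarrow>Br f e. \<Phi> v2 (d v1))
      = (\<Sum>(v1, v2)\<leftarrow>Br e f. \<Phi> (d v1) v2) + (\<Sum>(u1, u2)\<leftarrow>Bl f e. \<Phi> (d u2) u1)"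
    by (rule sum_brackets_deriv_exchange)
  have jacobi: "(\<Sum>(z1, z2)\<leftarrow>Bl e g. \<Sum>(r1, r2)\<leftarrow>Br f z1. \<phi> r2 z2 r1)
      = (\<Sum>(y1, y2)\<leftarrow>Br f g. \<Sum>(l1, l2)\<leftarrow>Bl e y2. \<phi> l1 l2 y1)
        + (\<Sum>(u1, u2)\<leftarrow>Bl e f. \<Phi> u1 (d u2)) - (\<Sum>(v1, v2)\<leftarrow>Br e f. \<Phi> (d v1) v2)"
  proof -
    have "(\<Sum>(z1, z2)\<leftarrow>Bl e g. \<Sum>(r1, r2)\<leftarrow>Br f z1. \<phi> r2 z2 r1)
      = (\<Sum>(y1, y2)\<leftarrow>Br f g. \<Sum>(l1, l2)\<leftarrow>Bl e y2. \<phi> l1 l2 y1)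
        + (\<Sum>(u1, u2)\<leftarrow>Bl f e. \<Phi> (d u2) u1) - (\<Sum>(v1, v2)\<leftarrow>Br f e. \<Phi> v2 (d v1))"
      using teq3_sum[OF jacobi_AEA[of f e g] ktrilin_rotate[OF eval]]
      by (simp add: sum_list_nested_simps \<Phi>_def ktrilin_uminus[OF eval])
    with exchange show ?thesis
      by algebra
  qed
  have swap: "(\<Sum>(p1, p2)\<leftarrow>P g y. \<phi> x p1 p2) = \<Phi> x y" for x y
    using sum_pairing_swap[of "\<phi> x" g y] eval
    by (simp add: \<Phi>_def kbilin_def ktrilin_def)
  show ?case
    using jacobi swap by (simp add: sum_list_nested_simps ktrilin_uminus[OF eval])
qed

lemma cyclic_jacobi_AEA:
  "teq3 sA sE sA
     [(r1, r2, y1). (y1, y2) \<leftarrow> Br f g, (r1, r2) \<leftarrow> Br e y2]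
     ([(v1, d p1, p2). (v1, v2) \<leftarrow> Br e f, (p1, p2) \<leftarrow> P g v2]
      @ [(p2, w2, p1). (w1, w2) \<leftarrow> Br e g, (p1, p2) \<leftarrow> P f (d w1)]
      @ [(- v1, l1, l2). (v1, v2) \<leftarrow> Br e f, (l1, l2) \<leftarrow> Bl g v2])"
proof (rule teq3I, goal_cases eval)
  case (eval \<phi>)
  define \<Psi> where "\<Psi> a x = (\<Sum>(r1, r2)\<leftarrow>Br x g. \<phi> a r2 r1)" for a x
  have "kbilin sA sE \<Psi>"
    unfolding \<Psi>_def
    by (rule kbilin_contract[where L = "\<lambda>x. Br x g", OF eval klin_bracket_r_left])
  moreover have "\<Psi> a (d b) = 0" for a b
    using teq2_sum[OF bracket_r_deriv_left, of "\<lambda>r1 r2. \<phi> a r2 r1"] eval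
    unfolding \<Psi>_def by (simp add: kbilin_def ktrilin_def)
  ultimately have skew: "(\<Sum>(v1, v2)\<leftarrow>Br e f. \<Psi> v1 v2) + (\<Sum>(u1, u2)\<leftarrow>Bl f e. \<Psi> u2 u1) = 0"
    by (rule sum_brackets_skew_vanish)
  have jacobi: "(\<Sum>(w1, w2)\<leftarrow>Br e g. \<Sum>(p1, p2)\<leftarrow>P f (d w1). \<phi> p2 w2 p1)
      = (\<Sum>(y1, y2)\<leftarrow>Br f g. \<Sum>(r1, r2)\<leftarrow>Br e y2. \<phi> r1 r2 y1)
        + (\<Sum>(u1, u2)\<leftarrow>Bl f e. \<Psi> u2 u1)"
    using teq3_sum[OF jacobi_AAE[of f e g] ktrilin_rotate[OF eval]]
    by (simp add: sum_list_nested_simps \<Psi>_def)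
  have deriv: "(\<Sum>(p1, p2)\<leftarrow>P g v2. \<phi> v1 (d p1) p2)
      = (\<Sum>(l1, l2)\<leftarrow>Bl g v2. \<phi> v1 l1 l2) + \<Psi> v1 v2" for v1 v2
    using sum_pairing_deriv_fst[of "\<phi> v1" g v2] eval
    by (simp add: \<Psi>_def kbilin_def ktrilin_def case_prod_unfold)
  show ?case
    using skew jacobi deriv by (simp add: sum_list_nested_simps ktrilin_uminus[OF eval])
qed

lemma cyclic_jacobi_AAE:
  "teq3 sA sA sE
     [(p1, p2, x1). (x1, x2) \<leftarrow> Bl f g, (p1, p2) \<leftarrow> P e (d x2)]
     ([(v1, p1, d p2). (v1, v2) \<leftarrow> Br e f, (p1, p2) \<leftarrow> P g v2]
      @ [(l2, z2, l1). (z1, z2) \<leftarrow> Bl e g, (l1, l2) \<leftarrow> Bl f z1]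
      @ [(- v1, r1, r2). (v1, v2) \<leftarrow> Br e f, (r1, r2) \<leftarrow> Br g v2])"
proof (rule teq3I, goal_cases eval)
  case (eval \<phi>)
  define \<Psi> where "\<Psi> a x = (\<Sum>(l1, l2)\<leftarrow>Bl x g. \<phi> a l2 l1)" for a x
  have "kbilin sA sE \<Psi>"
    unfolding \<Psi>_def
    by (rule kbilin_contract[where L = "\<lambda>x. Bl x g", OF eval klin_bracket_l_left])
  moreover have "\<Psi> a (d b) = 0" for a b
    using teq2_sum[OF bracket_l_deriv_left, of "\<lambda>l1 l2. \<phi> a l2 l1"] eval
    unfolding \<Psi>_def by (simp add: kbilin_def ktrilin_def)
  ultimately have skew: "(\<Sum>(v1, v2)\<leftarrow>Br e f. \<Psi> v1 v2) + (\<Sum>(u1, u2)\<leftarrow>Bl f e. \<Psi> u2 u1) = 0"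
    by (rule sum_brackets_skew_vanish)
  have jacobi: "(\<Sum>(z1, z2)\<leftarrow>Bl e g. \<Sum>(l1, l2)\<leftarrow>Bl f z1. \<phi> l2 z2 l1)
      = (\<Sum>(x1, x2)\<leftarrow>Bl f g. \<Sum>(p1, p2)\<leftarrow>P e (d x2). \<phi> p1 p2 x1)
        + (\<Sum>(u1, u2)\<leftarrow>Bl f e. \<Psi> u2 u1)"
    using teq3_sum[OF jacobi_EAA[of f e g] ktrilin_rotate[OF eval]]
    by (simp add: sum_list_nested_simps \<Psi>_def)
  have deriv: "(\<Sum>(p1, p2)\<leftarrow>P g v2. \<phi> v1 p1 (d p2))
      = (\<Sum>(r1, r2)\<leftarrow>Br g v2. \<phi> v1 r1 r2) + \<Psi> v1 v2" for v1 v2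
    using sum_pairing_deriv_snd[of "\<phi> v1" g v2] eval
    by (simp add: \<Psi>_def kbilin_def ktrilin_def case_prod_unfold)
  show ?case
    using skew jacobi deriv by (simp add: sum_list_nested_simps ktrilin_uminus[OF eval])
qed

end

theorem lemmaA2:
  fixes \<iota> :: "'k::field_char_0 \<Rightarrow> 'a::ring_1"
    and la :: "'a \<Rightarrow> 'e::ab_group_add \<Rightarrow> 'e"
    and ra :: "'e \<Rightarrow> 'a \<Rightarrow> 'e"
    and P :: "'e \<Rightarrow> 'e \<Rightarrow> ('a \<times> 'a) list"
    and d :: "'a \<Rightarrow> 'e"
    and Bl :: "'e \<Rightarrow> 'e \<Rightarrow> ('e \<times> 'a) list"
    and Br :: "'e \<Rightarrow> 'e \<Rightarrow> ('a \<times> 'e) list"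
  assumes "double_CD_algebra \<iota> la ra P d Bl Br"
  shows "teq3 (scE \<iota> la) (scA \<iota>) (scA \<iota>)
           [(l1, l2, y1). (y1, y2) \<leftarrow> Br f g, (l1, l2) \<leftarrow> Bl e y2]
           ([(d v1, p1, p2). (v1, v2) \<leftarrow> Br e f, (p1, p2) \<leftarrow> P g v2]
            @ [(r2, z2, r1). (z1, z2) \<leftarrow> Bl e g, (r1, r2) \<leftarrow> Br f z1]
            @ [(u1, - p1, p2). (u1, u2) \<leftarrow> Bl e f, (p1, p2) \<leftarrow> P g (d u2)])
       \<and> teq3 (scA \<iota>) (scE \<iota> la) (scA \<iota>)
           [(r1, r2, y1). (y1, y2) \<leftarrow> Br f g, (r1, r2) \<leftarrow> Br e y2]
           ([(v1, d p1, p2). (v1, v2) \<leftarrow> Br e f, (p1, p2) \<leftarrow> P g v2]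
            @ [(p2, w2, p1). (w1, w2) \<leftarrow> Br e g, (p1, p2) \<leftarrow> P f (d w1)]
            @ [(- v1, l1, l2). (v1, v2) \<leftarrow> Br e f, (l1, l2) \<leftarrow> Bl g v2])
       \<and> teq3 (scA \<iota>) (scA \<iota>) (scE \<iota> la)
           [(p1, p2, x1). (x1, x2) \<leftarrow> Bl f g, (p1, p2) \<leftarrow> P e (d x2)]
           ([(v1, p1, d p2). (v1, v2) \<leftarrow> Br e f, (p1, p2) \<leftarrow> P g v2]
            @ [(l2, z2, l1). (z1, z2) \<leftarrow> Bl e g, (l1, l2) \<leftarrow> Bl f z1]
            @ [(- v1, r1, r2). (v1, v2) \<leftarrow> Br e f, (r1, r2) \<leftarrow> Br g v2])"
proof -
  interpret double_CD \<iota> la ra P d Bl Br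
    using assms by (rule double_CD.intro)
  show ?thesis
    using cyclic_jacobi_EAA cyclic_jacobi_AEA cyclic_jacobi_AAE by blast
qed

end
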